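(* For any two simple graphs $G,F$ and any positive integer $k$, $$\mathrm{wsat}(G,F)\geq\frac{1}{k}\cdot\mathrm{rk}\text{-}\mathrm{sat}\left(G^k,\{F^k_e:\,e\in E(F)\}\right).$$
   Context: For a simple graph $G$, $G^k$ is the multigraph obtained from $G$ by taking $k$ instances of every edge. For $e\in E(F)$, $F^k_e$ is the multigraph on $V(F)$ containing each edge of $E(F)\setminus\{e\}$ exactly $k$ times and the edge $e$ exactly once. For simple graphs, $\mathrm{wsat}(G,F)$ is the minimum number of edges of a spanning subgraph $H\subseteq G$ from which $G$ can be obtained by adding the missing edges one at a time, each added edge creating a new copy of $F$ containing it. For a multigraph $G$ (edges are a multiset of pairs, distinct instances being distinct elements) and a family $\mathcal{F}$ of multigraphs, a matroid $M$ on $E(G)$ is weakly $\mathcal{F}$-saturated if every copy $\tilde F$ in $G$ of every $F\in\mathcal{F}$ is a cycle of $M$, i.e. $\mathrm{rk}_M(E(\tilde F)\setminus\{e\})=\mathrm{rk}_M(E(\tilde F))$ for all $e\in E(\tilde F)$; $\mathrm{rk}\text{-}\mathrm{sat}(G,\mathcal{F})$ is the maximum rank of such a matroid. *)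

theory Defs
  imports Complex_Main
begin

definition simple_graph :: "'a set \<Rightarrow> 'a set set \<Rightarrow> bool" where
  "simple_graph V E \<longleftrightarrow> finite V \<and> (\<forall>e\<in>E. e \<subseteq> V \<and> card e = 2)"

definition copy_containing ::
  "'a set \<Rightarrow> 'a set set \<Rightarrow> 'b set \<Rightarrow> 'b set set \<Rightarrow> 'a set \<Rightarrow> bool" where
  "copy_containing VG E VF EF e \<longleftrightarrow>
     (\<exists>\<phi>. inj_on \<phi> VF \<and> \<phi> ` VF \<subseteq> VG \<and> (\<forall>f\<in>EF. \<phi> ` f \<in> E) \<and> e \<in> (\<lambda>f. \<phi> ` f) ` EF)"

definition weakly_sat_graph ::
  "'a set \<Rightarrow> 'a set set \<Rightarrow> 'b set \<Rightarrow> 'b set set \<Rightarrow> 'a set set \<Rightarrow> bool" where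
  "weakly_sat_graph VG EG VF EF H \<longleftrightarrow> H \<subseteq> EG \<and>
     (\<exists>es. distinct es \<and> set es = EG - H \<and>
        (\<forall>i<length es. copy_containing VG (H \<union> set (take (Suc i) es)) VF EF (es ! i)))"

definition wsat :: "'a set \<Rightarrow> 'a set set \<Rightarrow> 'b set \<Rightarrow> 'b set set \<Rightarrow> nat" where
  "wsat VG EG VF EF = Min {card H | H. weakly_sat_graph VG EG VF EF H}"

text \<open>A multigraph is given by a vertex set, a set of edges (edge instances) and an endpoint
  map sending each edge to the set of its endpoints.\<close>
definition mg_copy ::
  "'v set \<Rightarrow> 'e set \<Rightarrow> ('e \<Rightarrow> 'v set) \<Rightarrow> 'w set \<Rightarrow> 'f set \<Rightarrow> ('f \<Rightarrow> 'w set) \<Rightarrow> 'e set \<Rightarrow> bool" where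
  "mg_copy VG EG endG VF EF endF S \<longleftrightarrow> S \<subseteq> EG \<and>
     (\<exists>\<phi> \<psi>. inj_on \<phi> VF \<and> \<phi> ` VF \<subseteq> VG \<and> bij_betw \<psi> EF S \<and>
        (\<forall>x\<in>EF. endG (\<psi> x) = \<phi> ` endF x))"

text \<open>G^k: k instances (e,i), i<k, of every edge e; endpoints are given by fst.\<close>
definition graph_pow :: "'a set set \<Rightarrow> nat \<Rightarrow> ('a set \<times> nat) set" where
  "graph_pow E k = E \<times> {..<k}"

definition graph_pow_but :: "'b set set \<Rightarrow> nat \<Rightarrow> 'b set \<Rightarrow> ('b set \<times> nat) set" where
  "graph_pow_but E k e = (E - {e}) \<times> {..<k} \<union> {(e, 0)}"

definition matroid_on :: "'e set \<Rightarrow> ('e set \<Rightarrow> bool) \<Rightarrow> bool" where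
  "matroid_on E indep \<longleftrightarrow> finite E \<and> (\<forall>X. indep X \<longrightarrow> X \<subseteq> E) \<and> indep {} \<and>
     (\<forall>X Y. indep Y \<and> X \<subseteq> Y \<longrightarrow> indep X) \<and>
     (\<forall>X Y. indep X \<and> indep Y \<and> card X < card Y \<longrightarrow> (\<exists>y\<in>Y - X. indep (insert y X)))"

definition mrank :: "('e set \<Rightarrow> bool) \<Rightarrow> 'e set \<Rightarrow> nat" where
  "mrank indep X = Max {card I | I. I \<subseteq> X \<and> indep I}"

text \<open>Weak saturation of a matroid on E(G) w.r.t. a family of multigraphs: every copy of every
  member of the family is a cycle of the matroid.\<close>
definition weakly_sat_matroid ::
  "'v set \<Rightarrow> 'e set \<Rightarrow> ('e \<Rightarrow> 'v set) \<Rightarrow> ('w set \<times> 'f set \<times> ('f \<Rightarrow> 'w set)) set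
     \<Rightarrow> ('e set \<Rightarrow> bool) \<Rightarrow> bool" where
  "weakly_sat_matroid VG EG endG Fam indep \<longleftrightarrow>
     (\<forall>(VF, EF, endF)\<in>Fam. \<forall>S. mg_copy VG EG endG VF EF endF S \<longrightarrow>
        (\<forall>x\<in>S. mrank indep (S - {x}) = mrank indep S))"

definition rk_sat ::
  "'v set \<Rightarrow> 'e set \<Rightarrow> ('e \<Rightarrow> 'v set) \<Rightarrow> ('w set \<times> 'f set \<times> ('f \<Rightarrow> 'w set)) set \<Rightarrow> nat" where
  "rk_sat VG EG endG Fam =
     Max {mrank indep EG | indep. matroid_on EG indep \<and> weakly_sat_matroid VG EG endG Fam indep}"

end

theory Submission
  imports Defs
begin

text \<open>Let H be a weakly F-saturated subgraph of G of minimum size, with saturating edge order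
  e_1, ..., e_m, and let M be a weakly saturated matroid on G^k. Take a basis I of the k copies
  of H. When e_i closes a copy of F, the k copies of the other edges of that copy together with
  any single copy of e_i form a copy of F^k_e, hence a cycle of M; so all copies of e_i lie in
  the closure of I as soon as those of the earlier edges do. Thus the closure of I is all of G^k,
  and the rank of M is at most |I| \<le> k |H|.\<close>

text \<open>For independent I this is the matroid closure of I.\<close>
definition mspan :: "('e set \<Rightarrow> bool) \<Rightarrow> 'e set \<Rightarrow> 'e set" where
  "mspan indep I = {x. indep (insert x I) \<longrightarrow> x \<in> I}"

locale matroid =
  fixes E :: "'e set" and indep :: "'e set \<Rightarrow> bool"
  assumes matroid_on: "matroid_on E indep"
begin

lemma finite_carrier: "finite E"
  using matroid_on by (simp add: matroid_on_def)

lemma indep_subset_carrier: "indep X \<Longrightarrow> X \<subseteq> E"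
  using matroid_on by (simp add: matroid_on_def)

lemma indep_finite: "indep X \<Longrightarrow> finite X"
  using finite_carrier indep_subset_carrier finite_subset by blast

lemma indep_empty: "indep {}"
  using matroid_on by (simp add: matroid_on_def)

lemma indep_subset: "indep Y \<Longrightarrow> X \<subseteq> Y \<Longrightarrow> indep X"
  using matroid_on unfolding matroid_on_def by blast

lemma indep_augment:
  "indep X \<Longrightarrow> indep Y \<Longrightarrow> card X < card Y \<Longrightarrow> \<exists>y\<in>Y - X. indep (insert y X)"
  using matroid_on unfolding matroid_on_def by blast

lemma finite_indep_cards: "finite {card I | I. I \<subseteq> X \<and> indep I}"
proof -
  have "{card I | I. I \<subseteq> X \<and> indep I} \<subseteq> card ` Pow E"
    using indep_subset_carrier by blast
  then show ?thesis
    using finite_carrier finite_subset by blast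
qed

lemma card_le_mrank: "J \<subseteq> X \<Longrightarrow> indep J \<Longrightarrow> card J \<le> mrank indep X"
  unfolding mrank_def by (rule Max_ge[OF finite_indep_cards]) auto

lemma mrank_attained: "\<exists>J. J \<subseteq> X \<and> indep J \<and> card J = mrank indep X"
proof -
  have "mrank indep X \<in> {card I | I. I \<subseteq> X \<and> indep I}"
    unfolding mrank_def using indep_empty by (intro Max_in[OF finite_indep_cards]) auto
  then show ?thesis by auto
qed

lemma basis_extend:
  assumes "indep J" "J \<subseteq> X"
  shows "\<exists>K. J \<subseteq> K \<and> K \<subseteq> X \<and> indep K \<and> card K = mrank indep X"
  using assms
proof (induction "mrank indep X - card J" arbitrary: J rule: less_induct)
  case less
  show ?case
  proof (cases "card J < mrank indep X")
    case False
    then have "card J = mrank indep X"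
      using card_le_mrank[OF less.prems(2,1)] by simp
    then show ?thesis using less.prems by blast
  next
    case True
    obtain I0 where I0: "I0 \<subseteq> X" "indep I0" "card I0 = mrank indep X"
      using mrank_attained by blast
    then obtain y where y: "y \<in> I0" "y \<notin> J" "indep (insert y J)"
      using indep_augment[OF less.prems(1) I0(2)] True by auto
    have "card (insert y J) = Suc (card J)"
      using y(2) indep_finite[OF less.prems(1)] by simp
    then have "mrank indep X - card (insert y J) < mrank indep X - card J"
      using True by simp
    moreover have "insert y J \<subseteq> X"
      using y(1) I0(1) less.prems(2) by blast
    ultimately show ?thesis
      using less.hyps[OF _ y(3)] by blast
  qed
qed

lemma subset_mspan: "I \<subseteq> mspan indep I"
  unfolding mspan_def by blast

lemma card_le_if_subset_mspan:
  assumes "indep I" "indep J" "J \<subseteq> mspan indep I"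
  shows "card J \<le> card I"
proof (rule ccontr)
  assume "\<not> card J \<le> card I"
  then obtain y where "y \<in> J - I" "indep (insert y I)"
    using indep_augment[OF assms(1,2)] by auto
  then show False
    using assms(3) unfolding mspan_def by blast
qed

lemma mrank_le_if_subset_mspan:
  assumes "indep I" "X \<subseteq> mspan indep I"
  shows "mrank indep X \<le> card I"
proof -
  obtain J where J: "J \<subseteq> X" "indep J" "card J = mrank indep X"
    using mrank_attained by blast
  then have "J \<subseteq> mspan indep I"
    using assms(2) by blast
  then show ?thesis
    using card_le_if_subset_mspan[OF assms(1) J(2)] J(3) by simp
qed

lemma mrank_mspan: "indep I \<Longrightarrow> mrank indep (mspan indep I) = card I"
  using card_le_mrank[OF subset_mspan] mrank_le_if_subset_mspan[OF _ order_refl]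
  by (rule antisym[rotated])

lemma subset_mspan_basis:
  assumes "I \<subseteq> X" "indep I" "card I = mrank indep X"
  shows "X \<subseteq> mspan indep I"
proof
  fix x assume "x \<in> X"
  show "x \<in> mspan indep I"
  proof (rule ccontr)
    assume "x \<notin> mspan indep I"
    then have "indep (insert x I)" "card (insert x I) = Suc (card I)"
      using indep_finite[OF assms(2)] unfolding mspan_def by auto
    moreover have "insert x I \<subseteq> X"
      using \<open>x \<in> X\<close> assms(1) by blast
    ultimately show False
      using card_le_mrank[of "insert x I" X] assms(3) by simp
  qed
qed

text \<open>Extend K to a basis of the closure of I, of size |I|, and exchange against the larger
  independent set I + x: the only element that can be added without exceeding the rank of the
  closure is x itself.\<close>
lemma indep_insert_notin_mspan:
  assumes I: "indep I" and K: "indep K" "K \<subseteq> mspan indep I" and x: "x \<notin> mspan indep I"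
  shows "indep (insert x K)"
proof -
  have xI: "indep (insert x I)" "x \<notin> I"
    using x unfolding mspan_def by auto
  obtain K1 where K1: "K \<subseteq> K1" "K1 \<subseteq> mspan indep I" "indep K1" "card K1 = card I"
    using basis_extend[OF K] mrank_mspan[OF I] by auto
  have "card K1 < card (insert x I)"
    using K1(4) xI(2) indep_finite[OF I] by simp
  then obtain y where y: "y \<in> insert x I - K1" "indep (insert y K1)"
    using indep_augment[OF K1(3) xI(1)] by blast
  have "y = x"
  proof (rule ccontr)
    assume "y \<noteq> x"
    then have "insert y K1 \<subseteq> mspan indep I"
      using y(1) K1(2) subset_mspan by blast
    then have "card (insert y K1) \<le> card I"
      using card_le_if_subset_mspan[OF I y(2)] by blast
    moreover have "card (insert y K1) = Suc (card I)"
      using y(1) K1(4) indep_finite[OF K1(3)] by simp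
    ultimately show False by simp
  qed
  then show ?thesis
    using indep_subset[OF y(2)] K1(1) by blast
qed

lemma mem_mspan_if_cycle:
  assumes I: "indep I" and "x \<in> S" and S: "S - {x} \<subseteq> mspan indep I"
    and cycle: "mrank indep (S - {x}) = mrank indep S"
  shows "x \<in> mspan indep I"
proof (rule ccontr)
  assume x: "x \<notin> mspan indep I"
  obtain K where K: "K \<subseteq> S - {x}" "indep K" "card K = mrank indep (S - {x})"
    using mrank_attained by blast
  have "indep (insert x K)"
    using indep_insert_notin_mspan[OF I K(2) _ x] K(1) S by blast
  then have "card (insert x K) \<le> mrank indep S"
    using card_le_mrank K(1) \<open>x \<in> S\<close> by blast
  moreover have "card (insert x K) = Suc (mrank indep (S - {x}))"
    using K(1,3) indep_finite[OF K(2)] by (simp add: subset_Diff_insert)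
  ultimately show False
    using cycle by simp
qed

end

lemma matroid_on_trivial: "finite E \<Longrightarrow> matroid_on E (\<lambda>X. X = {})"
  unfolding matroid_on_def by auto

lemma mrank_trivial: "mrank (\<lambda>X. X = {}) X = 0"
  unfolding mrank_def by auto

lemma simple_graph_finite_edges: "simple_graph V E \<Longrightarrow> finite E"
  unfolding simple_graph_def by (meson finite_Pow_iff finite_subset subsetI PowI)

lemma inj_on_edge_image: "simple_graph V E \<Longrightarrow> inj_on \<phi> V \<Longrightarrow> inj_on ((`) \<phi>) E"
  unfolding simple_graph_def by (meson PowI inj_on_image_Pow inj_on_subset subsetI)

lemma weakly_sat_graph_self: "weakly_sat_graph VG EG VF EF EG"
  unfolding weakly_sat_graph_def by (intro conjI exI[of _ "[]"]) auto

lemma wsat_attained: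
  assumes "finite EG"
  shows "\<exists>H. weakly_sat_graph VG EG VF EF H \<and> card H = wsat VG EG VF EF"
proof -
  let ?W = "{card H | H. weakly_sat_graph VG EG VF EF H}"
  have "?W \<subseteq> card ` Pow EG"
    unfolding weakly_sat_graph_def by blast
  then have "finite ?W"
    using assms finite_subset by blast
  moreover have "?W \<noteq> {}"
    using weakly_sat_graph_self by blast
  ultimately have "wsat VG EG VF EF \<in> ?W"
    unfolding wsat_def by (rule Min_in)
  then show ?thesis by auto
qed

lemma rk_sat_le:
  assumes "finite EG"
    and "\<And>indep. matroid_on EG indep \<Longrightarrow> weakly_sat_matroid VG EG endG Fam indep
           \<Longrightarrow> mrank indep EG \<le> n"
  shows "rk_sat VG EG endG Fam \<le> n"
proof -
  let ?R = "{mrank indep EG | indep. matroid_on EG indep \<and> weakly_sat_matroid VG EG endG Fam indep}"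
  have "weakly_sat_matroid VG EG endG Fam (\<lambda>X. X = {})"
    unfolding weakly_sat_matroid_def mrank_trivial by auto
  then have "?R \<noteq> {}"
    using matroid_on_trivial[OF assms(1)] by blast
  moreover have "?R \<subseteq> {..n}"
    using assms(2) by auto
  ultimately show ?thesis
    unfolding rk_sat_def by (meson Max_in atMost_iff finite_atMost finite_subset subsetD)
qed

lemma mg_copy_graph_pow_but:
  assumes F: "simple_graph VF EF" and \<phi>: "inj_on \<phi> VF" "\<phi> ` VF \<subseteq> VG" "\<forall>f\<in>EF. \<phi> ` f \<in> EG"
    and f0: "f0 \<in> EF" and j: "j < k"
  shows "mg_copy VG (graph_pow EG k) fst VF (graph_pow_but EF k f0) fst
           (insert (\<phi> ` f0, j) (((`) \<phi> ` (EF - {f0})) \<times> {..<k}))"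
proof -
  define \<psi> where "\<psi> = (\<lambda>(f, l). (\<phi> ` f, if f = f0 then j else l))"
  have inj: "inj_on ((`) \<phi>) EF"
    using inj_on_edge_image[OF F \<phi>(1)] .
  have "inj_on \<psi> (graph_pow_but EF k f0)"
  proof (rule inj_onI, clarify)
    fix f l g m
    assume fl: "(f, l) \<in> graph_pow_but EF k f0" and gm: "(g, m) \<in> graph_pow_but EF k f0"
      and eq: "\<psi> (f, l) = \<psi> (g, m)"
    have "f \<in> EF" "g \<in> EF"
      using fl gm f0 unfolding graph_pow_but_def by auto
    then have "f = g"
      using eq inj_onD[OF inj] unfolding \<psi>_def by simp
    then show "f = g \<and> l = m"
      using fl gm eq unfolding graph_pow_but_def \<psi>_def by (auto split: if_splits)
  qed
  moreover have "\<psi> ` graph_pow_but EF k f0 = insert (\<phi> ` f0, j) (((`) \<phi> ` (EF - {f0})) \<times> {..<k})"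
  proof -
    have "\<psi> ` ((EF - {f0}) \<times> {..<k}) = map_prod ((`) \<phi>) id ` ((EF - {f0}) \<times> {..<k})"
      by (rule image_cong[OF refl]) (auto simp: \<psi>_def split: if_splits)
    also have "\<dots> = ((`) \<phi> ` (EF - {f0})) \<times> {..<k}"
      by (rule map_prod_surj_on) simp_all
    finally show ?thesis
      unfolding graph_pow_but_def by (simp add: \<psi>_def)
  qed
  ultimately have "bij_betw \<psi> (graph_pow_but EF k f0) (insert (\<phi> ` f0, j) (((`) \<phi> ` (EF - {f0})) \<times> {..<k}))"
    by (simp add: bij_betw_def)
  moreover have "insert (\<phi> ` f0, j) (((`) \<phi> ` (EF - {f0})) \<times> {..<k}) \<subseteq> graph_pow EG k"
    unfolding graph_pow_def using \<phi>(3) f0 j by auto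
  moreover have "\<forall>x\<in>graph_pow_but EF k f0. fst (\<psi> x) = \<phi> ` fst x"
    unfolding \<psi>_def by auto
  ultimately show ?thesis
    unfolding mg_copy_def using \<phi>(1,2) by blast
qed

lemma weakly_sat_matroidD:
  assumes "weakly_sat_matroid VG EG endG Fam indep" "(VF, EF, endF) \<in> Fam"
    "mg_copy VG EG endG VF EF endF S" "x \<in> S"
  shows "mrank indep (S - {x}) = mrank indep S"
  using assms unfolding weakly_sat_matroid_def by fastforce

lemma mspan_saturation_step:
  assumes M: "matroid (graph_pow EG k) indep"
    and ws: "weakly_sat_matroid VG (graph_pow EG k) fst
               {(VF, graph_pow_but EF k f, fst) | f. f \<in> EF} indep"
    and F: "simple_graph VF EF" and I: "indep I" and A: "insert e A \<subseteq> EG"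
    and span: "A \<times> {..<k} \<subseteq> mspan indep I"
    and copy: "copy_containing VG (insert e A) VF EF e"
  shows "{e} \<times> {..<k} \<subseteq> mspan indep I"
proof -
  obtain \<phi> where \<phi>: "inj_on \<phi> VF" "\<phi> ` VF \<subseteq> VG" "\<forall>f\<in>EF. \<phi> ` f \<in> insert e A"
    and "e \<in> (`) \<phi> ` EF"
    using copy unfolding copy_containing_def by blast
  then obtain f0 where f0: "f0 \<in> EF" "e = \<phi> ` f0"
    by blast
  have in_EG: "\<forall>f\<in>EF. \<phi> ` f \<in> EG"
    using \<phi>(3) A by (meson subsetD)
  have others: "(`) \<phi> ` (EF - {f0}) \<subseteq> A"
  proof (rule image_subsetI)
    fix f assume f: "f \<in> EF - {f0}"
    then have "\<phi> ` f \<noteq> e"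
      using inj_onD[OF inj_on_edge_image[OF F \<phi>(1)] _ _ f0(1)] f0(2) by auto
    then show "\<phi> ` f \<in> A"
      using \<phi>(3) f by blast
  qed
  show ?thesis
  proof clarify
    fix j assume "j < k"
    define S where "S = insert (e, j) (((`) \<phi> ` (EF - {f0})) \<times> {..<k})"
    have "(VF, graph_pow_but EF k f0, fst) \<in> {(VF, graph_pow_but EF k f, fst) | f. f \<in> EF}"
      using f0(1) by blast
    moreover have "mg_copy VG (graph_pow EG k) fst VF (graph_pow_but EF k f0) fst S"
      unfolding S_def f0(2) using mg_copy_graph_pow_but[OF F \<phi>(1,2) in_EG f0(1) \<open>j < k\<close>] .
    moreover have ej: "(e, j) \<in> S"
      unfolding S_def by simp
    ultimately have "mrank indep (S - {(e, j)}) = mrank indep S"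
      by (rule weakly_sat_matroidD[OF ws])
    moreover have "S - {(e, j)} \<subseteq> A \<times> {..<k}"
      unfolding S_def using others by blast
    ultimately show "(e, j) \<in> mspan indep I"
      using matroid.mem_mspan_if_cycle[OF M I ej] span by blast
  qed
qed

lemma graph_pow_subset_mspan:
  assumes M: "matroid (graph_pow EG k) indep"
    and ws: "weakly_sat_matroid VG (graph_pow EG k) fst
               {(VF, graph_pow_but EF k f, fst) | f. f \<in> EF} indep"
    and F: "simple_graph VF EF" and H: "weakly_sat_graph VG EG VF EF H"
    and I: "indep I" "H \<times> {..<k} \<subseteq> mspan indep I"
  shows "graph_pow EG k \<subseteq> mspan indep I"
proof -
  obtain es where HEG: "H \<subseteq> EG" and es: "set es = EG - H"
    and copies: "\<forall>i<length es. copy_containing VG (H \<union> set (take (Suc i) es)) VF EF (es ! i)"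
    using H unfolding weakly_sat_graph_def by blast
  have "(H \<union> set (take i es)) \<times> {..<k} \<subseteq> mspan indep I" if "i \<le> length es" for i
    using that
  proof (induction i)
    case 0
    then show ?case
      using I(2) by simp
  next
    case (Suc i)
    let ?A = "H \<union> set (take i es)"
    have IH: "?A \<times> {..<k} \<subseteq> mspan indep I"
      using Suc by simp
    have step: "H \<union> set (take (Suc i) es) = insert (es ! i) ?A"
      using Suc.prems by (simp add: take_Suc_conv_app_nth)
    have "insert (es ! i) ?A \<subseteq> EG"
      using HEG es nth_mem[of i es] set_take_subset[of i es] Suc.prems by auto
    moreover have "copy_containing VG (insert (es ! i) ?A) VF EF (es ! i)"
      using copies Suc.prems step by (metis Suc_le_eq)
    ultimately have "{es ! i} \<times> {..<k} \<subseteq> mspan indep I"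
      by (rule mspan_saturation_step[OF M ws F I(1) _ IH])
    then show ?case
      using IH unfolding step by blast
  qed
  from this[of "length es"] have "(H \<union> set es) \<times> {..<k} \<subseteq> mspan indep I"
    by simp
  moreover have "H \<union> set es = EG"
    using es HEG by blast
  ultimately show ?thesis
    unfolding graph_pow_def by simp
qed

lemma mrank_graph_pow_le:
  assumes M: "matroid (graph_pow EG k) indep"
    and ws: "weakly_sat_matroid VG (graph_pow EG k) fst
               {(VF, graph_pow_but EF k f, fst) | f. f \<in> EF} indep"
    and F: "simple_graph VF EF" and H: "weakly_sat_graph VG EG VF EF H"
  shows "mrank indep (graph_pow EG k) \<le> k * card H"
proof -
  interpret matroid "graph_pow EG k" indep by (rule M)
  define B where "B = H \<times> {..<k}"
  have B: "B \<subseteq> graph_pow EG k"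
    using H unfolding B_def graph_pow_def weakly_sat_graph_def by blast
  obtain I where I: "I \<subseteq> B" "indep I" "card I = mrank indep B"
    using mrank_attained by blast
  have "graph_pow EG k \<subseteq> mspan indep I"
    using graph_pow_subset_mspan[OF M ws F H I(2)] subset_mspan_basis[OF I]
    unfolding B_def by blast
  then have "mrank indep (graph_pow EG k) \<le> card I"
    by (rule mrank_le_if_subset_mspan[OF I(2)])
  also have "\<dots> \<le> card B"
    using card_mono[OF finite_subset[OF B finite_carrier] I(1)] .
  also have "\<dots> = k * card H"
    unfolding B_def by (simp add: card_cartesian_product)
  finally show ?thesis .
qed

theorem lemma3:
  fixes VG :: "'a set" and EG :: "'a set set" and VF :: "'b set" and EF :: "'b set set"
    and k :: nat
  assumes "simple_graph VG EG" and "simple_graph VF EF" and "0 < k"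
  shows "real (wsat VG EG VF EF) \<ge>
           real (rk_sat VG (graph_pow EG k) fst
                   {(VF, graph_pow_but EF k e, fst) | e. e \<in> EF}) / real k"
proof -
  have fin: "finite EG"
    using simple_graph_finite_edges[OF assms(1)] .
  then obtain H where H: "weakly_sat_graph VG EG VF EF H" "card H = wsat VG EG VF EF"
    using wsat_attained by blast
  have "rk_sat VG (graph_pow EG k) fst {(VF, graph_pow_but EF k e, fst) | e. e \<in> EF}
          \<le> k * wsat VG EG VF EF"
  proof (rule rk_sat_le)
    show "finite (graph_pow EG k)"
      unfolding graph_pow_def using fin by simp
  next
    fix indep
    assume "matroid_on (graph_pow EG k) indep"
      and "weakly_sat_matroid VG (graph_pow EG k) fst
             {(VF, graph_pow_but EF k e, fst) | e. e \<in> EF} indep"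
    then show "mrank indep (graph_pow EG k) \<le> k * wsat VG EG VF EF"
      using mrank_graph_pow_le[OF matroid.intro _ assms(2) H(1)] H(2) by simp
  qed
  then show ?thesis
    using assms(3) by (simp add: divide_le_eq mult.commute flip: of_nat_mult)
qed

end
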